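(* Let $|\phi_{\mathrm w}(\theta)\rangle$ be the 2-d Ising whip state on the $L\times L$ lattice. For each $L$ let $(i_L,j_L)$ be a nearest-neighbour pair of sites, $i_L=(a_L,b_L)$ and $j_L\in\{(a_L+1,b_L),(a_L,b_L+1)\}$, such that $\min(a_L,b_L)\to\infty$ and $j_L\in\Lambda_L$. Then for every $\theta\in\mathbb R$, $$\lim_{L\to\infty}\langle Z_{i_L}Z_{j_L}\rangle_\theta=-\sum_{\mathcal L=1}^\infty\frac{4^{\mathcal L-1}\Gamma(\mathcal L-\frac12)}{\sqrt\pi\,\mathcal L!}(\cos\theta\sin\theta)^{2\mathcal L-1}=\frac{|\cos2\theta|-1}{\sin2\theta},$$ where the right-hand side is interpreted as $0$ when $\sin2\theta=0$. Moreover the Ising energy density satisfies $\lim_{L\to\infty}\langle H_L\rangle_\theta=\frac{1-|\cos2\theta|}{\sin2\theta}$ for $H_L=-\frac{1}{2L(L-1)}\sum_{\langle i,j\rangle}Z_iZ_j$ (sum over all nearest-neighbour pairs of $\Lambda_L$).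
   Context: 2-d Ising whip circuit: for $L\ge2$, $\Lambda_L=\{0,\dots,L-1\}^2$, one qubit per site, $N=L^2$. Directed edges $(a,b)\to(a+1,b)$ and $(a,b)\to(a,b+1)$ whenever the target lies in $\Lambda_L$. $\deg^-(v)$ is the number of incoming edges of $v$ (so $\deg^-=1$ on the lines $a=0$ or $b=0$ except at $(0,0)$, and $\deg^-=2$ otherwise). For each edge $u\to v$ let $G_{u\to v}(\theta)=\exp(-\mathrm i\,\theta\,Z_uY_v/\deg^-(v))$ with Pauli matrices $X,Y,Z$. The whip state is $|\phi_{\mathrm w}(\theta)\rangle=\prod G_{u\to v}(\theta)|+\rangle^{\otimes N}$, $|+\rangle=(|0\rangle+|1\rangle)/\sqrt2$, with gates applied in order of increasing $a+b$ of the target $v=(a,b)$ (gates with targets in the same layer commute). $\langle A\rangle_\theta=\langle\phi_{\mathrm w}(\theta)|A|\phi_{\mathrm w}(\theta)\rangle$. *)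

theory Defs
  imports "HOL-Analysis.Analysis"
begin

text \<open>Sites are pairs (a,b) of naturals; the lattice is {0..L-1}^2.
  A computational basis state is a configuration s :: site => bool
  (False = |0>, True = |1>), equal to False outside the lattice.\<close>

type_synonym site = "nat \<times> nat"
type_synonym config = "site \<Rightarrow> bool"
type_synonym qstate = "config \<Rightarrow> complex"

definition lattice :: "nat \<Rightarrow> site set" where
  "lattice L = {0..<L} \<times> {0..<L}"

definition configs :: "nat \<Rightarrow> config set" where
  "configs L = {s. \<forall>x. x \<notin> lattice L \<longrightarrow> \<not> s x}"

text \<open>Pauli operators acting on qubit v.  Z|0>=|0>, Z|1>=-|1>;
  Y|0> = i|1>, Y|1> = -i|0>.\<close>

definition pauliZ :: "site \<Rightarrow> qstate \<Rightarrow> qstate" where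
  "pauliZ v \<psi> = (\<lambda>s. (if s v then -1 else 1) * \<psi> s)"

definition pauliY :: "site \<Rightarrow> qstate \<Rightarrow> qstate" where
  "pauliY v \<psi> = (\<lambda>s. (if s v then \<i> else - \<i>) * \<psi> (s(v := \<not> s v)))"

definition indeg :: "site \<Rightarrow> nat" where
  "indeg v = (if fst v > 0 then 1 else 0) + (if snd v > 0 then 1 else 0)"

text \<open>The gate G_{u->v}(theta) = exp(-i theta Z_u Y_v / deg v)
  = cos(phi) I - i sin(phi) Z_u Y_v  with phi = theta / deg v,
  since (Z_u Y_v)^2 = I.\<close>

definition gate :: "real \<Rightarrow> site \<times> site \<Rightarrow> qstate \<Rightarrow> qstate" where
  "gate \<theta> e \<psi> = (let \<phi> = \<theta> / real (indeg (snd e)) in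
      (\<lambda>s. complex_of_real (cos \<phi>) * \<psi> s
           - \<i> * complex_of_real (sin \<phi>) * pauliZ (fst e) (pauliY (snd e) \<psi>) s))"

definition in_edges :: "site \<Rightarrow> (site \<times> site) list" where
  "in_edges v = (case v of (a, b) \<Rightarrow>
     (if a > 0 then [((a - 1, b), (a, b))] else []) @
     (if b > 0 then [((a, b - 1), (a, b))] else []))"

definition layer_edges :: "nat \<Rightarrow> nat \<Rightarrow> (site \<times> site) list" where
  "layer_edges L k = concat (map (\<lambda>a. in_edges (a, k - a))
      (filter (\<lambda>a. a \<le> k \<and> k - a < L) [0..<L]))"

text \<open>All edges, ordered by increasing layer of the target (first element applied first).\<close>

definition whip_edges :: "nat \<Rightarrow> (site \<times> site) list" where
  "whip_edges L = concat (map (layer_edges L) [1..<2 * L - 1])"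

definition plus_state :: "nat \<Rightarrow> qstate" where
  "plus_state L = (\<lambda>s. if s \<in> configs L then complex_of_real (1 / sqrt (2 ^ (L * L))) else 0)"

definition whip_state :: "nat \<Rightarrow> real \<Rightarrow> qstate" where
  "whip_state L \<theta> = foldl (\<lambda>\<psi> e. gate \<theta> e \<psi>) (plus_state L) (whip_edges L)"

definition expval :: "nat \<Rightarrow> qstate \<Rightarrow> (qstate \<Rightarrow> qstate) \<Rightarrow> complex" where
  "expval L \<psi> A = (\<Sum>s\<in>configs L. cnj (\<psi> s) * A \<psi> s)"

definition whip_ZZ :: "nat \<Rightarrow> real \<Rightarrow> site \<Rightarrow> site \<Rightarrow> complex" where
  "whip_ZZ L \<theta> i j = expval L (whip_state L \<theta>) (\<lambda>\<psi>. pauliZ i (pauliZ j \<psi>))"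

definition nn_pairs :: "nat \<Rightarrow> (site \<times> site) set" where
  "nn_pairs L = {(i, j). i \<in> lattice L \<and> j \<in> lattice L \<and>
       (j = (fst i + 1, snd i) \<or> j = (fst i, snd i + 1))}"

definition ising_energy :: "nat \<Rightarrow> real \<Rightarrow> complex" where
  "ising_energy L \<theta> = - complex_of_real (1 / (2 * real L * (real L - 1))) *
      (\<Sum>(i, j)\<in>nn_pairs L. whip_ZZ L \<theta> i j)"

text \<open>Series term, for n >= 1.\<close>

definition whip_term :: "real \<Rightarrow> nat \<Rightarrow> real" where
  "whip_term \<theta> n = 4 ^ (n - 1) * Gamma (real n - 1 / 2) / (sqrt pi * fact n)
      * (cos \<theta> * sin \<theta>) ^ (2 * n - 1)"

definition whip_limit :: "real \<Rightarrow> real" where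
  "whip_limit \<theta> = (if sin (2 * \<theta>) = 0 then 0
      else (\<bar>cos (2 * \<theta>)\<bar> - 1) / sin (2 * \<theta>))"

end

theory Submission
  imports Defs
begin

(* The gate on an edge u -> v is a Y-rotation of qubit v controlled by Z_u, and the layer order
   ensures that every control qubit is final when it is used.  Hence the whip state has real
   amplitudes of product form, the factor of site v being the cosine or sine of
   pi/4 + theta / deg v * (sum of the parent spins), and |psi|^2 is the law of spins drawn layer
   by layer, each given its parents, with E[z_v | parents] = -sin (2 theta) * (mean parent spin).
   Conditioning on the top layer gives linear recursions for the spin correlations: for two
   distinct sites of one layer it is sin^2 (2 theta) times the mean correlation of their parents,
   and for a parent i of j it is -sin (2 theta) times the mean correlation of i with the parents
   of j.  Along an antidiagonal, the correlation at distance d tends to x^d exponentially fast in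
   the distance from the boundary, where x = (1 - |cos 2 theta|) / (1 + |cos 2 theta|) is the
   fixed point of x = sin^2 (2 theta) / 4 * (1 + x)^2.  So nearest-neighbour correlations tend to
   -sin (2 theta) (1 + x) / 2, which is the claimed closed form.  The series is the Catalan
   generating function (1 - sqrt (1 - 4 y)) / 2 at y = (cos theta sin theta)^2, and in the energy
   density the O(L) bonds near the boundary contribute O(1/L). *)

section \<open>Product form of the whip state\<close>

definition spin :: "config \<Rightarrow> site \<Rightarrow> real" where
  "spin s v = (if s v then -1 else 1)"

definition layer :: "site \<Rightarrow> nat" where
  "layer v = fst v + snd v"

(* exp (-i beta Y) |+> has amplitude cos (beta + pi/4) on |0> and sin (beta + pi/4) on |1>. *)
definition rot_amp :: "real \<Rightarrow> bool \<Rightarrow> real" where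
  "rot_amp \<beta> b = (if b then sin (\<beta> + pi / 4) else cos (\<beta> + pi / 4))"

definition product_state :: "nat \<Rightarrow> (site \<Rightarrow> config \<Rightarrow> real) \<Rightarrow> qstate" where
  "product_state L \<beta> = (\<lambda>s. if s \<in> configs L
     then complex_of_real (\<Prod>v\<in>lattice L. rot_amp (\<beta> v s) (s v)) else 0)"

definition edge_angle :: "real \<Rightarrow> (site \<times> site) list \<Rightarrow> site \<Rightarrow> config \<Rightarrow> real" where
  "edge_angle \<theta> es v s =
     (\<Sum>e\<leftarrow>es. if snd e = v then \<theta> / real (indeg v) * spin s (fst e) else 0)"

definition site_angle :: "real \<Rightarrow> site \<Rightarrow> config \<Rightarrow> real" where
  "site_angle \<theta> v s = (\<Sum>e\<leftarrow>in_edges v. \<theta> / real (indeg v) * spin s (fst e))"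

lemma finite_lattice [simp]: "finite (lattice L)"
  by (simp add: lattice_def)

lemma configs_fun_upd:
  "v \<in> lattice L \<Longrightarrow> s(v := b) \<in> configs L \<longleftrightarrow> s \<in> configs L"
  by (auto simp: configs_def)

lemma edge_angle_Nil [simp]: "edge_angle \<theta> [] v s = 0"
  by (simp add: edge_angle_def)

lemma edge_angle_append [simp]:
  "edge_angle \<theta> (es @ es') v s = edge_angle \<theta> es v s + edge_angle \<theta> es' v s"
  by (simp add: edge_angle_def)

lemma edge_angle_fun_upd:
  assumes "\<forall>e\<in>set es. fst e \<noteq> w"
  shows "edge_angle \<theta> es v (s(w := b)) = edge_angle \<theta> es v s"
  unfolding edge_angle_def
  by (rule arg_cong[where f = sum_list], rule map_cong) (use assms in \<open>auto simp: spin_def\<close>)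

lemma rot_amp_add_spin:
  assumes "z = 1 \<or> z = -1"
  shows "rot_amp (\<beta> + \<phi> * z) b
    = cos \<phi> * rot_amp \<beta> b + sin \<phi> * z * (if b then 1 else -1) * rot_amp \<beta> (\<not> b)"
  using assms by (auto simp: rot_amp_def sin_add cos_add algebra_simps)

lemma plus_state_eq_product_state: "plus_state L = product_state L (\<lambda>_ _. 0)"
proof -
  have "rot_amp 0 b = 1 / sqrt 2" for b
    by (auto simp: rot_amp_def sin_45 cos_45 real_div_sqrt)
  moreover have "card (lattice L) = L * L"
    by (simp add: lattice_def card_cartesian_product)
  moreover have "(1 / sqrt 2) ^ (L * L) = 1 / sqrt (2 ^ (L * L))"
    by (simp add: real_sqrt_power power_one_over)
  ultimately show ?thesis
    by (simp add: plus_state_def product_state_def fun_eq_iff)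
qed

lemma gate_rotates_target:
  assumes uv: "u \<noteq> v" "v \<in> lattice L"
    and \<psi>: "\<And>s. \<psi> s = (if s \<in> configs L
      then complex_of_real (rot_amp (\<beta> s) (s v) * P s) else 0)"
    and flip: "\<And>s b. \<beta> (s(v := b)) = \<beta> s" "\<And>s b. P (s(v := b)) = P s"
  shows "gate \<theta> (u, v) \<psi> s = (if s \<in> configs L
    then complex_of_real (rot_amp (\<beta> s + \<theta> / real (indeg v) * spin s u) (s v) * P s) else 0)"
proof -
  define \<phi> where "\<phi> = \<theta> / real (indeg v)"
  have "gate \<theta> (u, v) \<psi> s = complex_of_real (cos \<phi>) * \<psi> s - \<i> * complex_of_real (sin \<phi>) *
      ((if s u then -1 else 1) * ((if s v then \<i> else - \<i>) * \<psi> (s(v := \<not> s v))))"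
    by (simp add: gate_def \<phi>_def pauliZ_def pauliY_def Let_def uv(1))
  also have "\<dots> = (if s \<in> configs L
      then complex_of_real (rot_amp (\<beta> s + \<phi> * spin s u) (s v) * P s) else 0)"
  proof (cases "s \<in> configs L")
    case True
    have "spin s u = 1 \<or> spin s u = -1"
      by (simp add: spin_def)
    from rot_amp_add_spin[OF this, of "\<beta> s" \<phi> "s v"] True show ?thesis
      by (simp add: \<psi> configs_fun_upd[OF uv(2)] flip spin_def) (auto simp: algebra_simps)
  next
    case False
    then show ?thesis
      by (simp add: \<psi> configs_fun_upd[OF uv(2)])
  qed
  finally show ?thesis
    by (simp add: \<phi>_def)
qed

lemma gate_product_state:
  assumes "u \<noteq> v" "v \<in> lattice L" and v_not_source: "\<forall>e\<in>set es. fst e \<noteq> v"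
  shows "gate \<theta> (u, v) (product_state L (edge_angle \<theta> es))
    = product_state L (edge_angle \<theta> (es @ [(u, v)]))"
proof
  fix s
  define P where "P s = (\<Prod>w\<in>lattice L - {v}. rot_amp (edge_angle \<theta> es w s) (s w))" for s
  have split: "(\<Prod>w\<in>lattice L. f w) = f v * (\<Prod>w\<in>lattice L - {v}. f w)" for f :: "site \<Rightarrow> real"
    using assms(2) by (simp add: prod.remove)
  have P_flip: "P (s(v := b)) = P s" for s b
    unfolding P_def by (rule prod.cong) (auto simp: edge_angle_fun_upd[OF v_not_source])
  have new_edge: "edge_angle \<theta> [(u, v)] w s = (if w = v then \<theta> / real (indeg v) * spin s u else 0)"
    for w s
    by (auto simp: edge_angle_def)
  have P_new: "(\<Prod>w\<in>lattice L - {v}. rot_amp (edge_angle \<theta> (es @ [(u, v)]) w s) (s w)) = P s" for s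
    unfolding P_def by (rule prod.cong) (auto simp: new_edge)
  have "gate \<theta> (u, v) (product_state L (edge_angle \<theta> es)) s = (if s \<in> configs L then complex_of_real
      (rot_amp (edge_angle \<theta> es v s + \<theta> / real (indeg v) * spin s u) (s v) * P s) else 0)"
    using assms(1,2) by (intro gate_rotates_target P_flip edge_angle_fun_upd[OF v_not_source])
      (auto simp: product_state_def split P_def)
  also have "\<dots> = product_state L (edge_angle \<theta> (es @ [(u, v)])) s"
    unfolding product_state_def split P_new by (simp add: new_edge)
  finally show "gate \<theta> (u, v) (product_state L (edge_angle \<theta> es)) s
      = product_state L (edge_angle \<theta> (es @ [(u, v)])) s" .
qed

lemma foldl_gate_eq_product_state:
  assumes "\<forall>e\<in>set es. fst e \<in> lattice L \<and> snd e \<in> lattice L \<and> layer (fst e) + 1 = layer (snd e)"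
    and "sorted_wrt (\<lambda>e e'. layer (snd e) \<le> layer (snd e')) es"
  shows "foldl (\<lambda>\<psi> e. gate \<theta> e \<psi>) (plus_state L) es = product_state L (edge_angle \<theta> es)"
  using assms
proof (induction es rule: rev_induct)
  case Nil
  then show ?case
    by (simp add: plus_state_eq_product_state)
next
  case (snoc e es)
  obtain u v where e: "e = (u, v)"
    by (cases e)
  have "v \<in> lattice L" "layer u + 1 = layer v"
    using snoc.prems(1) e by auto
  moreover have "\<forall>e'\<in>set es. fst e' \<noteq> v"
  proof
    fix e' assume "e' \<in> set es"
    then have "layer (snd e') \<le> layer v" "layer (fst e') + 1 = layer (snd e')"
      using snoc.prems e by (auto simp: sorted_wrt_append)
    then show "fst e' \<noteq> v"
      by auto
  qed
  ultimately have "gate \<theta> (u, v) (product_state L (edge_angle \<theta> es))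
      = product_state L (edge_angle \<theta> (es @ [(u, v)]))"
    by (intro gate_product_state) auto
  moreover have "foldl (\<lambda>\<psi> e. gate \<theta> e \<psi>) (plus_state L) es = product_state L (edge_angle \<theta> es)"
    using snoc by (auto simp: sorted_wrt_append)
  ultimately show ?case
    by (simp add: e del: edge_angle_append)
qed

lemma in_edges_props:
  assumes "e \<in> set (in_edges v)"
  shows "snd e = v \<and> layer (fst e) + 1 = layer v \<and> fst (fst e) \<le> fst v \<and> snd (fst e) \<le> snd v"
  using assms by (cases v) (auto simp: in_edges_def layer_def split: if_splits)

lemma layer_edges_props:
  assumes "e \<in> set (layer_edges L k)"
  shows "layer (snd e) = k \<and> snd e \<in> lattice L \<and> fst e \<in> lattice L"
proof -
  obtain a where a: "a < L" "a \<le> k" "k - a < L" "e \<in> set (in_edges (a, k - a))"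
    using assms by (auto simp: layer_edges_def)
  obtain x y where "fst e = (x, y)"
    by (cases "fst e")
  with a in_edges_props[OF a(4)] show ?thesis
    by (auto simp: layer_def lattice_def)
qed

lemma whip_edges_props:
  assumes "e \<in> set (whip_edges L)"
  shows "fst e \<in> lattice L \<and> snd e \<in> lattice L \<and> layer (fst e) + 1 = layer (snd e)"
proof -
  obtain k where k: "e \<in> set (layer_edges L k)"
    using assms by (auto simp: whip_edges_def)
  then obtain a where "e \<in> set (in_edges (a, k - a))"
    by (auto simp: layer_edges_def)
  with layer_edges_props[OF k] show ?thesis
    using in_edges_props by simp
qed

lemma sorted_wrt_concat_map_blocks:
  assumes "sorted ks" "\<forall>k\<in>set ks. \<forall>x\<in>set (f k). g x = (k :: 'b :: linorder)"
  shows "sorted_wrt (\<lambda>x y. g x \<le> g y) (concat (map f ks))"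
proof -
  have block: "sorted_wrt (\<lambda>x y. g x \<le> g y) xs" if "\<forall>x\<in>set xs. g x = k" for xs and k :: 'b
    using that by (induction xs) auto
  from assms show ?thesis
    by (induction ks) (auto simp: sorted_wrt_append intro!: block)
qed

lemma whip_edges_sorted:
  "sorted_wrt (\<lambda>e e'. layer (snd e) \<le> layer (snd e')) (whip_edges L)"
  unfolding whip_edges_def
  by (rule sorted_wrt_concat_map_blocks) (auto simp: layer_edges_props)

lemma sum_list_map_eq_single:
  assumes "distinct xs" "\<And>y. y \<in> set xs \<Longrightarrow> y \<noteq> x \<Longrightarrow> g y = 0"
  shows "(\<Sum>y\<leftarrow>xs. g y) = (if x \<in> set xs then g x else (0 :: 'a :: comm_monoid_add))"
proof -
  have "(\<Sum>y\<leftarrow>xs. g y) = sum g (set xs)"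
    by (rule sum_list_distinct_conv_sum_set[OF assms(1)])
  also have "\<dots> = sum g (set xs \<inter> {x})"
    by (rule sum.mono_neutral_right) (use assms(2) in auto)
  finally show ?thesis
    by auto
qed

lemma edge_angle_eq_0: "\<forall>e\<in>set es. snd e \<noteq> v \<Longrightarrow> edge_angle \<theta> es v s = 0"
  unfolding edge_angle_def by (induction es) auto

lemma edge_angle_concat: "edge_angle \<theta> (concat ess) v s = (\<Sum>es\<leftarrow>ess. edge_angle \<theta> es v s)"
  by (induction ess) auto

lemma edge_angle_in_edges: "edge_angle \<theta> (in_edges v) v s = site_angle \<theta> v s"
  unfolding edge_angle_def site_angle_def
  by (rule arg_cong[where f = sum_list], rule map_cong) (auto dest: in_edges_props)

lemma edge_angle_layer_edges:
  assumes "(a, b) \<in> lattice L"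
  shows "edge_angle \<theta> (layer_edges L (a + b)) (a, b) s = site_angle \<theta> (a, b) s"
proof -
  let ?as = "filter (\<lambda>a'. a' \<le> a + b \<and> a + b - a' < L) [0..<L]"
  have "edge_angle \<theta> (layer_edges L (a + b)) (a, b) s
      = (\<Sum>a'\<leftarrow>?as. edge_angle \<theta> (in_edges (a', a + b - a')) (a, b) s)"
    by (simp add: layer_edges_def edge_angle_concat o_def)
  also have "\<dots> = (if a \<in> set ?as then edge_angle \<theta> (in_edges (a, a + b - a)) (a, b) s else 0)"
    by (rule sum_list_map_eq_single) (auto intro!: edge_angle_eq_0 dest: in_edges_props)
  also have "\<dots> = site_angle \<theta> (a, b) s"
    using assms by (simp add: lattice_def edge_angle_in_edges)
  finally show ?thesis .
qed

lemma edge_angle_whip_edges: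
  assumes "v \<in> lattice L"
  shows "edge_angle \<theta> (whip_edges L) v s = site_angle \<theta> v s"
proof -
  obtain a b where v: "v = (a, b)"
    by (cases v)
  have "edge_angle \<theta> (whip_edges L) v s = (\<Sum>k\<leftarrow>[1..<2 * L - 1]. edge_angle \<theta> (layer_edges L k) v s)"
    by (simp add: whip_edges_def edge_angle_concat o_def)
  also have "\<dots> = (if a + b \<in> set [1..<2 * L - 1] then edge_angle \<theta> (layer_edges L (a + b)) v s else 0)"
    by (rule sum_list_map_eq_single)
      (auto simp: v layer_def intro!: edge_angle_eq_0 dest: layer_edges_props)
  also have "\<dots> = site_angle \<theta> v s"
  proof (cases "a + b = 0")
    case True
    then show ?thesis
      by (simp add: v site_angle_def in_edges_def)
  next
    case False
    with assms show ?thesis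
      by (auto simp: v lattice_def edge_angle_layer_edges)
  qed
  finally show ?thesis .
qed

lemma whip_state_eq_product_state: "whip_state L \<theta> = product_state L (site_angle \<theta>)"
proof -
  have "whip_state L \<theta> = product_state L (edge_angle \<theta> (whip_edges L))"
    unfolding whip_state_def
    by (intro foldl_gate_eq_product_state ballI whip_edges_props whip_edges_sorted)
  then show ?thesis
    by (auto simp: product_state_def fun_eq_iff edge_angle_whip_edges intro!: prod.cong)
qed

section \<open>The whip distribution as a Markov chain\<close>

definition cond_prob :: "real \<Rightarrow> site \<Rightarrow> config \<Rightarrow> real" where
  "cond_prob \<theta> v s = (rot_amp (site_angle \<theta> v s) (s v))\<^sup>2"

definition configs_on :: "site set \<Rightarrow> config set" where
  "configs_on S = {s. \<forall>x. x \<notin> S \<longrightarrow> \<not> s x}"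

definition weight :: "real \<Rightarrow> site set \<Rightarrow> config \<Rightarrow> real" where
  "weight \<theta> S s = (\<Prod>v\<in>S. cond_prob \<theta> v s)"

definition expect :: "real \<Rightarrow> site set \<Rightarrow> (config \<Rightarrow> real) \<Rightarrow> real" where
  "expect \<theta> S f = (\<Sum>s\<in>configs_on S. weight \<theta> S s * f s)"

definition parents :: "site \<Rightarrow> site set" where
  "parents v = fst ` set (in_edges v)"

definition parent_mean :: "site \<Rightarrow> config \<Rightarrow> real" where
  "parent_mean v s = (\<Sum>e\<leftarrow>in_edges v. spin s (fst e)) / real (indeg v)"

definition parent_closed :: "site set \<Rightarrow> bool" where
  "parent_closed S \<longleftrightarrow> (\<forall>v\<in>S. parents v \<subseteq> S)"

definition depends_on :: "site set \<Rightarrow> (config \<Rightarrow> real) \<Rightarrow> bool" where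
  "depends_on S f \<longleftrightarrow> (\<forall>s s'. (\<forall>x\<in>S. s x = s' x) \<longrightarrow> f s = f s')"

lemma finite_configs_on: "finite S \<Longrightarrow> finite (configs_on S)"
proof -
  assume "finite S"
  have "configs_on S \<subseteq> (\<lambda>A x. x \<in> A) ` Pow S"
  proof
    fix s assume "s \<in> configs_on S"
    then have "s = (\<lambda>x. x \<in> {x\<in>S. s x})" "{x\<in>S. s x} \<in> Pow S"
      by (auto simp: configs_on_def fun_eq_iff)
    then show "s \<in> (\<lambda>A x. x \<in> A) ` Pow S"
      by blast
  qed
  with \<open>finite S\<close> show ?thesis
    by (meson finite_Pow_iff finite_imageI finite_subset)
qed

lemma parents_layer: "u \<in> parents v \<Longrightarrow> layer u + 1 = layer v"
  by (auto simp: parents_def dest: in_edges_props)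

lemma parents_le: "u \<in> parents v \<Longrightarrow> fst u \<le> fst v \<and> snd u \<le> snd v"
  by (auto simp: parents_def dest: in_edges_props)

lemma not_in_parents_self: "v \<notin> parents v"
  using parents_layer by fastforce

lemma fst_in_parents: "e \<in> set (in_edges v) \<Longrightarrow> fst e \<in> parents v"
  by (simp add: parents_def)

lemma site_angle_fun_upd: "w \<notin> parents v \<Longrightarrow> site_angle \<theta> v (s(w := b)) = site_angle \<theta> v s"
  unfolding site_angle_def
  by (rule arg_cong[where f = sum_list], rule map_cong) (auto simp: spin_def parents_def)

lemma parent_mean_fun_upd: "w \<notin> parents v \<Longrightarrow> parent_mean v (s(w := b)) = parent_mean v s"
  unfolding parent_mean_def
  by (rule arg_cong[where f = "\<lambda>x. x / _"], rule arg_cong[where f = sum_list], rule map_cong)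
    (auto simp: spin_def parents_def)

lemma cond_prob_fun_upd:
  "v \<noteq> w \<Longrightarrow> w \<notin> parents v \<Longrightarrow> cond_prob \<theta> v (s(w := b)) = cond_prob \<theta> v s"
  by (simp add: cond_prob_def site_angle_fun_upd)

lemma cond_prob_sum_one: "cond_prob \<theta> w (s(w := True)) + cond_prob \<theta> w (s(w := False)) = 1"
  by (simp add: cond_prob_def site_angle_fun_upd[OF not_in_parents_self] rot_amp_def)

(* Uses that a site has at most two parents, with spins in {1, -1}. *)
lemma sin_double_site_angle: "sin (2 * site_angle \<theta> v s) = sin (2 * \<theta>) * parent_mean v s"
proof -
  obtain a b where v: "v = (a, b)"
    by (cases v)
  have "sin (2 * (\<theta> / 2 * x + \<theta> / 2 * y)) = sin (2 * \<theta>) * ((x + y) / 2)"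
    if "x = 1 \<or> x = -1" "y = 1 \<or> y = -1" for x y :: real
    using that by (auto simp: algebra_simps)
  then show ?thesis
    by (cases a; cases b) (simp_all add: v site_angle_def parent_mean_def in_edges_def indeg_def spin_def)
qed

lemma cond_prob_diff:
  "cond_prob \<theta> w (s(w := False)) - cond_prob \<theta> w (s(w := True)) = - sin (2 * \<theta>) * parent_mean w s"
proof -
  have "cos (x + pi / 4) ^ 2 - sin (x + pi / 4) ^ 2 = - sin (2 * x)" for x
  proof -
    have "cos (x + pi / 4) ^ 2 - sin (x + pi / 4) ^ 2 = cos (2 * x + pi / 2)"
      by (simp add: cos_double[symmetric] algebra_simps)
    then show ?thesis
      by (simp add: cos_add)
  qed
  then show ?thesis
    by (simp add: cond_prob_def site_angle_fun_upd[OF not_in_parents_self] rot_amp_def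
        sin_double_site_angle)
qed

lemma weight_fun_upd:
  assumes "w \<notin> S" "\<forall>v\<in>S. w \<notin> parents v"
  shows "weight \<theta> S (s(w := b)) = weight \<theta> S s"
  unfolding weight_def by (rule prod.cong) (use assms in \<open>auto intro: cond_prob_fun_upd\<close>)

lemma weight_nonneg: "weight \<theta> S s \<ge> 0"
  by (simp add: weight_def cond_prob_def prod_nonneg)

lemma configs_on_insert:
  assumes "w \<notin> S"
  shows "configs_on (insert w S) = configs_on S \<union> (\<lambda>s. s(w := True)) ` configs_on S"
proof
  show "configs_on (insert w S) \<subseteq> configs_on S \<union> (\<lambda>s. s(w := True)) ` configs_on S"
  proof
    fix s assume s: "s \<in> configs_on (insert w S)"
    show "s \<in> configs_on S \<union> (\<lambda>s. s(w := True)) ` configs_on S"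
    proof (cases "s w")
      case True
      then have "s = (s(w := False))(w := True)"
        by (auto simp: fun_eq_iff)
      moreover have "s(w := False) \<in> configs_on S"
        using s by (auto simp: configs_on_def)
      ultimately show ?thesis
        by blast
    next
      case False
      then show ?thesis
        using s by (auto simp: configs_on_def)
    qed
  qed
  show "configs_on S \<union> (\<lambda>s. s(w := True)) ` configs_on S \<subseteq> configs_on (insert w S)"
    by (auto simp: configs_on_def)
qed

lemma expect_insert:
  assumes "finite S" "w \<notin> S" "\<forall>v\<in>S. w \<notin> parents v"
  shows "expect \<theta> (insert w S) g = expect \<theta> S
    (\<lambda>s. cond_prob \<theta> w s * g s + cond_prob \<theta> w (s(w := True)) * g (s(w := True)))"
proof -
  have w_False: "\<not> s w" if "s \<in> configs_on S" for s
    using that assms(2) unfolding configs_on_def by blast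
  have disj: "configs_on S \<inter> (\<lambda>s. s(w := True)) ` configs_on S = {}"
    using w_False by (auto, metis fun_upd_same)
  have inj: "inj_on (\<lambda>s. s(w := True)) (configs_on S)"
  proof (rule inj_onI)
    fix s s' assume "s \<in> configs_on S" "s' \<in> configs_on S" "s(w := True) = s'(w := True)"
    then have "(s(w := True))(w := False) = (s'(w := True))(w := False)" "\<not> s w" "\<not> s' w"
      using w_False by auto
    then show "s = s'"
      by (simp add: fun_eq_iff) metis
  qed
  have weight_insert: "weight \<theta> (insert w S) s = cond_prob \<theta> w s * weight \<theta> S s" for s
    using assms by (simp add: weight_def)
  have "expect \<theta> (insert w S) g = (\<Sum>s\<in>configs_on S. weight \<theta> (insert w S) s * g s) +
      (\<Sum>s\<in>(\<lambda>s. s(w := True)) ` configs_on S. weight \<theta> (insert w S) s * g s)"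
    unfolding expect_def configs_on_insert[OF assms(2)]
    by (rule sum.union_disjoint) (auto simp: finite_configs_on assms(1) disj)
  also have "(\<Sum>s\<in>(\<lambda>s. s(w := True)) ` configs_on S. weight \<theta> (insert w S) s * g s) =
      (\<Sum>s\<in>configs_on S. weight \<theta> (insert w S) (s(w := True)) * g (s(w := True)))"
    by (simp add: sum.reindex[OF inj])
  also have "(\<Sum>s\<in>configs_on S. weight \<theta> (insert w S) s * g s) +
      (\<Sum>s\<in>configs_on S. weight \<theta> (insert w S) (s(w := True)) * g (s(w := True))) =
      expect \<theta> S (\<lambda>s. cond_prob \<theta> w s * g s + cond_prob \<theta> w (s(w := True)) * g (s(w := True)))"
    unfolding expect_def sum.distrib[symmetric]
    by (rule sum.cong) (auto simp: weight_insert weight_fun_upd[OF assms(2,3)] algebra_simps)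
  finally show ?thesis .
qed

lemma configs_on_fun_upd_False: "s \<in> configs_on S \<Longrightarrow> w \<notin> S \<Longrightarrow> s(w := False) = s"
  by (auto simp: configs_on_def fun_eq_iff)

lemma expect_insert_indep:
  assumes "finite S" "w \<notin> S" "\<forall>v\<in>S. w \<notin> parents v" and f: "\<And>s b. f (s(w := b)) = f s"
  shows "expect \<theta> (insert w S) f = expect \<theta> S f"
proof -
  have "cond_prob \<theta> w s * f s + cond_prob \<theta> w (s(w := True)) * f (s(w := True)) = f s"
    if "s \<in> configs_on S" for s
  proof -
    have "cond_prob \<theta> w s + cond_prob \<theta> w (s(w := True)) = 1"
      using cond_prob_sum_one[of \<theta> w s] configs_on_fun_upd_False[OF that assms(2)] by simp
    then show ?thesis
      by (simp add: f flip: distrib_right)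
  qed
  then show ?thesis
    unfolding expect_insert[OF assms(1-3)] unfolding expect_def by (intro sum.cong) auto
qed

lemma expect_insert_spin:
  assumes "finite S" "w \<notin> S" "\<forall>v\<in>S. w \<notin> parents v" and f: "\<And>s b. f (s(w := b)) = f s"
  shows "expect \<theta> (insert w S) (\<lambda>s. spin s w * f s)
    = - sin (2 * \<theta>) * expect \<theta> S (\<lambda>s. parent_mean w s * f s)"
proof -
  have "cond_prob \<theta> w s * (spin s w * f s)
      + cond_prob \<theta> w (s(w := True)) * (spin (s(w := True)) w * f (s(w := True)))
      = - sin (2 * \<theta>) * (parent_mean w s * f s)"
    if "s \<in> configs_on S" for s
  proof -
    have s: "s(w := False) = s"
      using that assms(2) by (rule configs_on_fun_upd_False)
    then have "spin s w = 1"
      by (metis fun_upd_same spin_def)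
    moreover have "cond_prob \<theta> w s - cond_prob \<theta> w (s(w := True)) = - sin (2 * \<theta>) * parent_mean w s"
      using cond_prob_diff[of \<theta> w s] s by simp
    ultimately show ?thesis
      by (simp add: f spin_def left_diff_distrib [symmetric] mult.assoc)
  qed
  then show ?thesis
    unfolding expect_insert[OF assms(1-3)] unfolding expect_def sum_distrib_left
    by (intro sum.cong) (auto simp: mult.left_commute)
qed

lemma expect_cong: "(\<And>s. f s = g s) \<Longrightarrow> expect \<theta> S f = expect \<theta> S g"
  by (simp add: expect_def)

lemma expect_empty: "expect \<theta> {} f = f (\<lambda>_. False)"
proof -
  have "configs_on {} = {\<lambda>_. False}"
    by (auto simp: configs_on_def fun_eq_iff)
  then show ?thesis
    by (simp add: expect_def weight_def)
qed

lemma expect_divide: "expect \<theta> S (\<lambda>s. f s / c) = expect \<theta> S f / c"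
  by (simp add: expect_def sum_divide_distrib)

lemma expect_sum_list:
  "expect \<theta> S (\<lambda>s. \<Sum>x\<leftarrow>xs. g x s) = (\<Sum>x\<leftarrow>xs. expect \<theta> S (g x))"
  by (induction xs) (simp_all add: expect_def sum.distrib algebra_simps)

lemma expect_marginal:
  assumes "finite S'" "parent_closed S" "parent_closed S'" "S \<subseteq> S'" "depends_on S f"
  shows "expect \<theta> S' f = expect \<theta> S f"
  using assms
proof (induction "card (S' - S)" arbitrary: S')
  case 0
  then show ?case
    using finite_subset by fastforce
next
  case (Suc n)
  have fin: "finite (S' - S)"
    using Suc.prems by simp
  have "S' - S \<noteq> {}"
    using Suc.hyps(2) by (intro notI) simp
  with fin have "Max (layer ` (S' - S)) \<in> layer ` (S' - S)"
    by (intro Max_in) auto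
  then obtain w where w: "w \<in> S' - S" "layer w = Max (layer ` (S' - S))"
    by (metis imageE)
  with fin have w_max: "\<forall>u\<in>S' - S. layer u \<le> layer w"
    by simp
  have w_childless: "w \<notin> parents v" if "v \<in> S'" for v
  proof
    assume "w \<in> parents v"
    moreover have "v \<in> S \<or> layer v \<le> layer w"
      using w_max that by blast
    ultimately show False
      using Suc.prems(2) w(1) parents_layer[of w v] by (auto simp: parent_closed_def)
  qed
  have card: "n = card ((S' - {w}) - S)"
    using Suc.hyps(2) w(1) fin by (simp add: Diff_insert2[symmetric] insert_Diff_if)
  have closed: "parent_closed (S' - {w})"
    using Suc.prems(3) w_childless unfolding parent_closed_def by blast
  have f: "f (s(w := b)) = f s" for s b
    using Suc.prems(5) w(1) unfolding depends_on_def by (metis DiffD2 fun_upd_other)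
  have "expect \<theta> S' f = expect \<theta> (insert w (S' - {w})) f"
    using w(1) by (simp add: insert_absorb)
  also have "\<dots> = expect \<theta> (S' - {w}) f"
    using Suc.prems(1) w_childless f by (intro expect_insert_indep) auto
  also have "\<dots> = expect \<theta> S f"
    using Suc.prems w(1) by (intro Suc.hyps(1) card closed) auto
  finally show ?case .
qed

lemma parent_closed_empty: "parent_closed {}"
  by (simp add: parent_closed_def)

lemma parent_closed_Un: "parent_closed A \<Longrightarrow> parent_closed B \<Longrightarrow> parent_closed (A \<union> B)"
  by (auto simp: parent_closed_def)

lemma parent_closed_below_layer: "parent_closed S \<Longrightarrow> parent_closed {u \<in> S. layer u < n}"
  by (auto simp: parent_closed_def dest: parents_layer)

lemma expect_one: "finite S \<Longrightarrow> parent_closed S \<Longrightarrow> expect \<theta> S (\<lambda>_. 1) = 1"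
  using expect_marginal[of S "{}" "\<lambda>_. 1" \<theta>]
  by (simp add: parent_closed_empty depends_on_def expect_empty)

lemma abs_expect_le_one:
  assumes "finite S" "parent_closed S" "\<And>s. \<bar>f s\<bar> \<le> 1"
  shows "\<bar>expect \<theta> S f\<bar> \<le> 1"
proof -
  have "\<bar>expect \<theta> S f\<bar> \<le> (\<Sum>s\<in>configs_on S. \<bar>weight \<theta> S s * f s\<bar>)"
    unfolding expect_def by (rule sum_abs)
  also have "\<dots> \<le> (\<Sum>s\<in>configs_on S. weight \<theta> S s * 1)"
    by (rule sum_mono) (simp add: abs_mult weight_nonneg assms(3) mult_left_le)
  also have "\<dots> = 1"
    using expect_one[OF assms(1,2), of \<theta>] by (simp add: expect_def)
  finally show ?thesis .
qed

definition ancestors :: "site \<Rightarrow> site set" where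
  "ancestors v = {0..fst v} \<times> {0..snd v}"

definition corr :: "real \<Rightarrow> site \<Rightarrow> site \<Rightarrow> real" where
  "corr \<theta> p q = expect \<theta> (ancestors p \<union> ancestors q) (\<lambda>s. spin s p * spin s q)"

lemma finite_ancestors [simp]: "finite (ancestors v)"
  by (simp add: ancestors_def)

lemma mem_ancestors: "u \<in> ancestors v \<longleftrightarrow> fst u \<le> fst v \<and> snd u \<le> snd v"
  by (cases u) (auto simp: ancestors_def)

lemma ancestors_self: "v \<in> ancestors v"
  by (simp add: mem_ancestors)

lemma parent_closed_ancestors: "parent_closed (ancestors v)"
  unfolding parent_closed_def by (force simp: mem_ancestors dest: parents_le)

lemma layer_le_of_ancestor: "u \<in> ancestors v \<Longrightarrow> layer u \<le> layer v"
  by (auto simp: mem_ancestors layer_def)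

lemma ancestor_eq_of_layer_eq: "u \<in> ancestors v \<Longrightarrow> layer u = layer v \<Longrightarrow> u = v"
  by (cases u; cases v) (auto simp: mem_ancestors layer_def)

lemma ancestors_parent:
  "u \<in> parents v \<Longrightarrow> ancestors u \<subseteq> {w \<in> ancestors v. layer w < layer v}"
  using parents_le[of u v] parents_layer[of u v] layer_le_of_ancestor[of _ u]
  by (fastforce simp: mem_ancestors)

lemma spin_mult_self: "spin s p * spin s p = 1"
  by (simp add: spin_def)

lemma corr_self: "corr \<theta> p p = 1"
  unfolding corr_def by (simp add: spin_mult_self expect_one parent_closed_ancestors)

lemma corr_commute: "corr \<theta> p q = corr \<theta> q p"
  unfolding corr_def by (simp add: Un_commute mult.commute)

lemma abs_corr_le_one: "\<bar>corr \<theta> p q\<bar> \<le> 1"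
  unfolding corr_def
  by (rule abs_expect_le_one) (auto simp: parent_closed_Un parent_closed_ancestors abs_mult spin_def)

lemma expect_spin_mult_eq_corr:
  assumes "finite S" "parent_closed S" "ancestors p \<union> ancestors q \<subseteq> S"
  shows "expect \<theta> S (\<lambda>s. spin s p * spin s q) = corr \<theta> p q"
  unfolding corr_def
  using assms ancestors_self[of p] ancestors_self[of q]
  by (intro expect_marginal) (auto simp: parent_closed_Un parent_closed_ancestors depends_on_def spin_def)

lemma whip_ZZ_eq_corr:
  assumes "p \<in> lattice L" "q \<in> lattice L"
  shows "whip_ZZ L \<theta> p q = complex_of_real (corr \<theta> p q)"
proof -
  have "whip_ZZ L \<theta> p q
      = (\<Sum>s\<in>configs L. complex_of_real (weight \<theta> (lattice L) s * (spin s p * spin s q)))"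
    unfolding whip_ZZ_def expval_def
  proof (rule sum.cong)
    fix s assume s: "s \<in> configs L"
    define P where "P = (\<Prod>v\<in>lattice L. rot_amp (site_angle \<theta> v s) (s v))"
    have "P\<^sup>2 = weight \<theta> (lattice L) s"
      by (simp add: P_def weight_def cond_prob_def prod_power_distrib)
    with s show "cnj (whip_state L \<theta> s) * pauliZ p (pauliZ q (whip_state L \<theta>)) s
        = complex_of_real (weight \<theta> (lattice L) s * (spin s p * spin s q))"
      by (simp add: whip_state_eq_product_state product_state_def pauliZ_def spin_def
          P_def[symmetric] power2_eq_square) (metis of_real_mult)
  qed simp
  also have "\<dots> = complex_of_real (expect \<theta> (lattice L) (\<lambda>s. spin s p * spin s q))"
    by (simp add: expect_def configs_def configs_on_def)
  also have "expect \<theta> (lattice L) (\<lambda>s. spin s p * spin s q) = corr \<theta> p q"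
    using assms
    by (intro expect_spin_mult_eq_corr)
      (auto simp: mem_ancestors lattice_def parent_closed_def dest: parents_le)
  finally show ?thesis .
qed

section \<open>Recursions for spin correlations\<close>

lemma expect_top_spin:
  assumes "finite S" "w \<in> S" "\<forall>u\<in>S. layer u \<le> layer w" "\<And>s b. f (s(w := b)) = f s"
  shows "expect \<theta> S (\<lambda>s. spin s w * f s)
    = - sin (2 * \<theta>) * expect \<theta> (S - {w}) (\<lambda>s. parent_mean w s * f s)"
proof -
  have "\<forall>v\<in>S - {w}. w \<notin> parents v"
    using assms(3) parents_layer by fastforce
  then show ?thesis
    using assms expect_insert_spin[of "S - {w}" w f \<theta>] by (simp add: insert_absorb)
qed

lemma expect_spin_mult_parent_mean:
  assumes "finite S" "parent_closed S" "ancestors i \<subseteq> S" "\<And>u. u \<in> parents v \<Longrightarrow> ancestors u \<subseteq> S"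
  shows "expect \<theta> S (\<lambda>s. spin s i * parent_mean v s)
    = (\<Sum>e\<leftarrow>in_edges v. corr \<theta> i (fst e)) / real (indeg v)"
proof -
  have "expect \<theta> S (\<lambda>s. spin s i * parent_mean v s)
      = expect \<theta> S (\<lambda>s. (\<Sum>e\<leftarrow>in_edges v. spin s i * spin s (fst e)) / real (indeg v))"
    by (rule expect_cong) (simp add: parent_mean_def sum_list_const_mult)
  also have "\<dots> = (\<Sum>e\<leftarrow>in_edges v. expect \<theta> S (\<lambda>s. spin s i * spin s (fst e))) / real (indeg v)"
    by (simp add: expect_divide expect_sum_list)
  also have "\<dots> = (\<Sum>e\<leftarrow>in_edges v. corr \<theta> i (fst e)) / real (indeg v)"
    by (intro arg_cong[where f = "\<lambda>x. x / _"] arg_cong[where f = sum_list] map_cong refl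
        expect_spin_mult_eq_corr) (use assms in \<open>blast dest: fst_in_parents\<close>)+
  finally show ?thesis .
qed

lemma expect_parent_mean_mult:
  assumes "finite S" "parent_closed S" "\<And>u. u \<in> parents p \<union> parents q \<Longrightarrow> ancestors u \<subseteq> S"
  shows "expect \<theta> S (\<lambda>s. parent_mean p s * parent_mean q s)
    = (\<Sum>e\<leftarrow>in_edges p. \<Sum>e'\<leftarrow>in_edges q. corr \<theta> (fst e) (fst e'))
      / (real (indeg p) * real (indeg q))"
proof -
  have "expect \<theta> S (\<lambda>s. parent_mean p s * parent_mean q s)
      = expect \<theta> S (\<lambda>s. (\<Sum>e\<leftarrow>in_edges p. spin s (fst e) * parent_mean q s) / real (indeg p))"
    by (rule expect_cong) (simp add: parent_mean_def[of p] sum_list_mult_const)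
  also have "\<dots> = (\<Sum>e\<leftarrow>in_edges p. expect \<theta> S (\<lambda>s. spin s (fst e) * parent_mean q s))
      / real (indeg p)"
    by (simp add: expect_divide expect_sum_list)
  also have "\<dots> = (\<Sum>e\<leftarrow>in_edges p. (\<Sum>e'\<leftarrow>in_edges q. corr \<theta> (fst e) (fst e')) / real (indeg q))
      / real (indeg p)"
    by (intro arg_cong[where f = "\<lambda>x. x / _"] arg_cong[where f = sum_list] map_cong refl
        expect_spin_mult_parent_mean) (use assms in \<open>blast dest: fst_in_parents\<close>)+
  finally show ?thesis
    by (simp add: divide_inverse sum_list_mult_const mult.assoc)
qed

lemma corr_same_layer:
  assumes "p \<noteq> q" "layer p = layer q"
  shows "corr \<theta> p q = (sin (2 * \<theta>))\<^sup>2
    * (\<Sum>e\<leftarrow>in_edges p. \<Sum>e'\<leftarrow>in_edges q. corr \<theta> (fst e) (fst e'))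
    / (real (indeg p) * real (indeg q))"
proof -
  define S where "S = ancestors p \<union> ancestors q"
  have layer_le: "\<forall>u\<in>S. layer u \<le> layer p"
    using assms(2) by (auto simp: S_def dest: layer_le_of_ancestor)
  have below: "S - {p} - {q} = {u \<in> S. layer u < layer p}"
  proof (intro equalityI subsetI)
    fix u assume u: "u \<in> S - {p} - {q}"
    then have "layer u \<noteq> layer p"
      using assms(2) ancestor_eq_of_layer_eq[of u p] ancestor_eq_of_layer_eq[of u q]
      by (auto simp: S_def)
    with u layer_le show "u \<in> {u \<in> S. layer u < layer p}"
      by auto
  qed (use assms(2) in auto)
  have q_not_parent: "q \<notin> parents p"
    using assms(2) parents_layer by fastforce
  have "corr \<theta> p q = expect \<theta> S (\<lambda>s. spin s p * spin s q)"
    by (simp add: corr_def S_def)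
  also have "\<dots> = - sin (2 * \<theta>) * expect \<theta> (S - {p}) (\<lambda>s. parent_mean p s * spin s q)"
    using layer_le assms(1) by (intro expect_top_spin) (auto simp: S_def ancestors_self spin_def)
  also have "expect \<theta> (S - {p}) (\<lambda>s. parent_mean p s * spin s q)
      = expect \<theta> (S - {p}) (\<lambda>s. spin s q * parent_mean p s)"
    by (simp add: mult.commute)
  also have "\<dots> = - sin (2 * \<theta>) * expect \<theta> (S - {p} - {q}) (\<lambda>s. parent_mean q s * parent_mean p s)"
    using layer_le assms
    by (intro expect_top_spin) (auto simp: S_def ancestors_self parent_mean_fun_upd[OF q_not_parent])
  also have "expect \<theta> (S - {p} - {q}) (\<lambda>s. parent_mean q s * parent_mean p s)
      = expect \<theta> (S - {p} - {q}) (\<lambda>s. parent_mean p s * parent_mean q s)"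
    by (simp add: mult.commute)
  also have "\<dots> = (\<Sum>e\<leftarrow>in_edges p. \<Sum>e'\<leftarrow>in_edges q. corr \<theta> (fst e) (fst e'))
      / (real (indeg p) * real (indeg q))"
  proof -
    have "parent_closed {u \<in> S. layer u < layer p}"
      by (intro parent_closed_below_layer) (simp add: S_def parent_closed_Un parent_closed_ancestors)
    then show ?thesis
      unfolding below using assms(2)
      by (intro expect_parent_mean_mult) (auto simp: S_def dest!: ancestors_parent)
  qed
  finally show ?thesis
    by (simp add: power2_eq_square)
qed

lemma corr_parent_child:
  assumes "i \<in> parents j"
  shows "corr \<theta> i j = - sin (2 * \<theta>) * (\<Sum>e\<leftarrow>in_edges j. corr \<theta> i (fst e)) / real (indeg j)"
proof -
  have i_below: "ancestors i \<subseteq> {u \<in> ancestors j. layer u < layer j}"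
    using assms by (rule ancestors_parent)
  have below: "ancestors j - {j} = {u \<in> ancestors j. layer u < layer j}"
    using ancestor_eq_of_layer_eq layer_le_of_ancestor by (fastforce simp: le_neq_implies_less)
  have "i \<noteq> j"
    using assms not_in_parents_self by blast
  have "ancestors i \<union> ancestors j = ancestors j"
    using i_below by blast
  then have "corr \<theta> i j = expect \<theta> (ancestors j) (\<lambda>s. spin s j * spin s i)"
    by (simp add: corr_def mult.commute)
  also have "\<dots> = - sin (2 * \<theta>) * expect \<theta> (ancestors j - {j}) (\<lambda>s. parent_mean j s * spin s i)"
    using \<open>i \<noteq> j\<close> by (intro expect_top_spin) (auto simp: ancestors_self layer_le_of_ancestor spin_def)
  also have "expect \<theta> (ancestors j - {j}) (\<lambda>s. parent_mean j s * spin s i)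
      = expect \<theta> (ancestors j - {j}) (\<lambda>s. spin s i * parent_mean j s)"
    by (simp add: mult.commute)
  also have "\<dots> = (\<Sum>e\<leftarrow>in_edges j. corr \<theta> i (fst e)) / real (indeg j)"
    unfolding below using i_below
    by (intro expect_spin_mult_parent_mean)
      (auto simp: parent_closed_below_layer parent_closed_ancestors dest: ancestors_parent)
  finally show ?thesis
    by simp
qed

section \<open>Nearest-neighbour correlations\<close>

lemma length_in_edges: "length (in_edges v) = indeg v"
  by (cases v) (auto simp: in_edges_def indeg_def)

lemma indeg_pos: "layer v \<ge> 1 \<Longrightarrow> indeg v \<ge> 1"
  by (cases v) (auto simp: indeg_def layer_def)

lemma corr_same_layer_eq_one:
  assumes "(sin (2 * \<theta>))\<^sup>2 = 1"
  shows "layer p = layer q \<Longrightarrow> corr \<theta> p q = 1"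
proof (induction "layer p" arbitrary: p q)
  case 0
  then have "p = (0, 0)" "q = (0, 0)"
    by (cases p; cases q; auto simp: layer_def)+
  then show ?case
    by (simp add: corr_self)
next
  case (Suc n)
  show ?case
  proof (cases "p = q")
    case True
    then show ?thesis
      by (simp add: corr_self)
  next
    case False
    have parents_corr: "corr \<theta> (fst e) (fst e') = 1"
      if "e \<in> set (in_edges p)" "e' \<in> set (in_edges q)" for e e'
      using Suc parents_layer[OF fst_in_parents[OF that(1)]] parents_layer[OF fst_in_parents[OF that(2)]]
      by simp
    have "indeg p \<ge> 1" "indeg q \<ge> 1"
      using indeg_pos Suc.hyps(2) Suc.prems by (metis le_add1 plus_1_eq_Suc)+
    then show ?thesis
      using corr_same_layer[OF False Suc.prems, of \<theta>] assms
      by (simp add: parents_corr cong: map_cong) (simp add: sum_list_triv length_in_edges)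
  qed
qed

definition corr_ratio :: "real \<Rightarrow> real" where
  "corr_ratio \<theta> = (1 - \<bar>cos (2 * \<theta>)\<bar>) / (1 + \<bar>cos (2 * \<theta>)\<bar>)"

lemma corr_ratio_nonneg: "0 \<le> corr_ratio \<theta>"
  and corr_ratio_le_one: "corr_ratio \<theta> \<le> 1"
  using abs_cos_le_one[of "2 * \<theta>"] by (auto simp: corr_ratio_def divide_simps)

lemma corr_ratio_fixed_point: "(sin (2 * \<theta>))\<^sup>2 / 4 * (1 + corr_ratio \<theta>)\<^sup>2 = corr_ratio \<theta>"
proof -
  define c where "c = \<bar>cos (2 * \<theta>)\<bar>"
  have c: "0 \<le> c" "(sin (2 * \<theta>))\<^sup>2 = (1 - c) * (1 + c)"
    by (simp_all add: c_def sin_squared_eq power2_abs algebra_simps power2_eq_square)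
  have x: "corr_ratio \<theta> = (1 - c) / (1 + c)"
    by (simp add: corr_ratio_def c_def)
  have pos: "1 + c > 0"
    using c(1) by simp
  then have "1 + corr_ratio \<theta> = 2 / (1 + c)"
    by (simp add: x field_simps)
  then have "(sin (2 * \<theta>))\<^sup>2 / 4 * (1 + corr_ratio \<theta>)\<^sup>2
      = (1 - c) * (1 + c) / ((1 + c) * (1 + c))"
    unfolding c(2) by (simp add: power2_eq_square)
  also have "\<dots> = corr_ratio \<theta>"
    using pos by (simp add: x)
  finally show ?thesis .
qed

definition diag_corr :: "real \<Rightarrow> nat \<Rightarrow> nat \<Rightarrow> nat \<Rightarrow> real" where
  "diag_corr \<theta> a m d = corr \<theta> (a, m + d) (a + d, m)"

lemma diag_corr_0: "diag_corr \<theta> a m 0 = 1"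
  by (simp add: diag_corr_def corr_self)

lemma abs_diag_corr_le_one: "\<bar>diag_corr \<theta> a m d\<bar> \<le> 1"
  by (simp add: diag_corr_def abs_corr_le_one)

lemma diag_corr_Suc:
  "diag_corr \<theta> (Suc a) (Suc m) (Suc d) = (sin (2 * \<theta>))\<^sup>2 / 4 *
     (diag_corr \<theta> a (Suc m) (Suc d) + diag_corr \<theta> a m (Suc (Suc d))
      + diag_corr \<theta> (Suc a) (Suc m) d + diag_corr \<theta> (Suc a) m (Suc d))"
  using corr_same_layer[of "(Suc a, Suc m + Suc d)" "(Suc a + Suc d, Suc m)" \<theta>]
  by (simp add: diag_corr_def in_edges_def indeg_def layer_def algebra_simps)

definition diag_corr_error :: "real \<Rightarrow> nat \<Rightarrow> nat \<Rightarrow> nat \<Rightarrow> real" where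
  "diag_corr_error \<theta> a m d = diag_corr \<theta> a m d - corr_ratio \<theta> ^ d"

(* The powers of corr_ratio solve the recursion of diag_corr_Suc exactly, because corr_ratio is
   its fixed point. *)
lemma diag_corr_error_Suc:
  "diag_corr_error \<theta> (Suc a) (Suc m) (Suc d) = (sin (2 * \<theta>))\<^sup>2 / 4 *
     (diag_corr_error \<theta> a (Suc m) (Suc d) + diag_corr_error \<theta> a m (Suc (Suc d))
      + diag_corr_error \<theta> (Suc a) (Suc m) d + diag_corr_error \<theta> (Suc a) m (Suc d))"
proof -
  define r where "r = (sin (2 * \<theta>))\<^sup>2"
  define x where "x = corr_ratio \<theta>"
  have "r / 4 * (x ^ Suc d + x ^ Suc (Suc d) + x ^ d + x ^ Suc d) = x ^ d * (r / 4 * (1 + x)\<^sup>2)"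
    by (simp add: power2_eq_square algebra_simps)
  also have "r / 4 * (1 + x)\<^sup>2 = x"
    unfolding r_def x_def by (rule corr_ratio_fixed_point)
  finally have "x ^ Suc d = r / 4 * (x ^ Suc d + x ^ Suc (Suc d) + x ^ d + x ^ Suc d)"
    by simp
  then show ?thesis
    unfolding diag_corr_error_def diag_corr_Suc r_def[symmetric] x_def[symmetric]
    by (simp add: algebra_simps)
qed

lemma abs_diag_corr_error_le:
  assumes "d \<ge> 1" "k \<le> a" "k \<le> m"
  shows "\<bar>diag_corr_error \<theta> a m d\<bar> \<le> 2 * ((sin (2 * \<theta>))\<^sup>2) ^ k"
  using assms
proof (induction k arbitrary: a m d)
  case 0
  have "\<bar>diag_corr \<theta> a m d - corr_ratio \<theta> ^ d\<bar> \<le> \<bar>diag_corr \<theta> a m d\<bar> + \<bar>corr_ratio \<theta> ^ d\<bar>"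
    by (rule abs_triangle_ineq4)
  also have "\<dots> \<le> 1 + 1"
    using abs_diag_corr_le_one corr_ratio_nonneg corr_ratio_le_one
    by (intro add_mono) (auto simp: power_le_one)
  finally show ?case
    by (simp add: diag_corr_error_def)
next
  case (Suc k)
  obtain a0 m0 d0 where am: "a = Suc a0" "m = Suc m0" "d = Suc d0"
    using Suc.prems by (metis Suc_le_D not0_implies_Suc not_one_le_zero)
  define r where "r = (sin (2 * \<theta>))\<^sup>2"
  define err where "err = diag_corr_error \<theta> a0 (Suc m0) (Suc d0) + diag_corr_error \<theta> a0 m0 (Suc (Suc d0))
    + diag_corr_error \<theta> (Suc a0) (Suc m0) d0 + diag_corr_error \<theta> (Suc a0) m0 (Suc d0)"
  have r: "0 \<le> r"
    by (simp add: r_def)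
  have "\<bar>diag_corr_error \<theta> (Suc a0) (Suc m0) d0\<bar> \<le> 2 * r ^ k"
    using Suc r am by (cases "d0 = 0") (auto simp: diag_corr_error_def diag_corr_0 r_def)
  moreover have "\<bar>diag_corr_error \<theta> a0 (Suc m0) (Suc d0)\<bar> \<le> 2 * r ^ k"
    "\<bar>diag_corr_error \<theta> a0 m0 (Suc (Suc d0))\<bar> \<le> 2 * r ^ k"
    "\<bar>diag_corr_error \<theta> (Suc a0) m0 (Suc d0)\<bar> \<le> 2 * r ^ k"
    using Suc am by (simp_all add: r_def)
  ultimately have "\<bar>err\<bar> \<le> 8 * r ^ k"
    unfolding err_def by arith
  then have "r * \<bar>err\<bar> \<le> r * (8 * r ^ k)"
    using r by (rule mult_left_mono)
  with r show ?case
    by (simp add: am diag_corr_error_Suc r_def[symmetric] err_def[symmetric] abs_mult)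
qed

definition nn_limit :: "real \<Rightarrow> real" where
  "nn_limit \<theta> = - sin (2 * \<theta>) / 2 * (1 + corr_ratio \<theta>)"

lemma whip_limit_eq_nn_limit: "whip_limit \<theta> = nn_limit \<theta>"
proof -
  define s where "s = sin (2 * \<theta>)"
  define c where "c = \<bar>cos (2 * \<theta>)\<bar>"
  have c: "0 \<le> c" "c\<^sup>2 = 1 - s\<^sup>2"
    by (simp_all add: c_def s_def power2_abs sin_squared_eq)
  have nn: "nn_limit \<theta> = - s / (1 + c)"
  proof -
    have "1 + corr_ratio \<theta> = 2 / (1 + c)"
      using c by (simp add: corr_ratio_def flip: c_def) (simp add: field_simps)
    then show ?thesis
      by (simp add: nn_limit_def s_def)
  qed
  show ?thesis
  proof (cases "s = 0")
    case True
    then show ?thesis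
      by (simp add: whip_limit_def nn s_def)
  next
    case False
    have "(c - 1) * (1 + c) = - s * s"
      using c by (simp add: power2_eq_square algebra_simps)
    then have "(c - 1) / s = - s / (1 + c)"
      using False c by (simp add: field_simps)
    with False show ?thesis
      by (simp add: whip_limit_def nn s_def c_def)
  qed
qed

lemma abs_nn_limit_le_one: "\<bar>nn_limit \<theta>\<bar> \<le> 1"
proof -
  have "\<bar>sin (2 * \<theta>)\<bar> * (1 + corr_ratio \<theta>) \<le> 1 * 2"
    using abs_sin_le_one[of "2 * \<theta>"] corr_ratio_nonneg corr_ratio_le_one by (intro mult_mono) auto
  then show ?thesis
    using corr_ratio_nonneg[of \<theta>] by (simp add: nn_limit_def abs_mult)
qed

lemma sin_double_squared_le_one: "(sin (2 * \<theta>))\<^sup>2 \<le> (1 :: real)"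
  using abs_sin_le_one[of "2 * \<theta>"] by (simp add: abs_square_le_1)

lemma parent_of_nn: "j = (a + 1, b) \<or> j = (a, b + 1) \<Longrightarrow> (a, b) \<in> parents j"
  by (auto simp: parents_def in_edges_def image_iff)

lemma nn_corr_eq_diag_corr:
  "corr \<theta> (Suc a, Suc b) (Suc (Suc a), Suc b) = - sin (2 * \<theta>) / 2 * (1 + diag_corr \<theta> (Suc a) b 1)"
  "corr \<theta> (Suc a, Suc b) (Suc a, Suc (Suc b)) = - sin (2 * \<theta>) / 2 * (1 + diag_corr \<theta> a (Suc b) 1)"
  using corr_parent_child[OF parent_of_nn, of "(Suc a + 1, Suc b)" "Suc a" "Suc b" \<theta>]
    corr_parent_child[OF parent_of_nn, of "(Suc a, Suc b + 1)" "Suc a" "Suc b" \<theta>]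
    corr_commute[of \<theta> "(a, Suc (Suc b))" "(Suc a, Suc b)"]
  by (simp_all add: in_edges_def indeg_def corr_self diag_corr_def algebra_simps)

lemma abs_diag_nn_corr_sub_nn_limit_le:
  assumes "k \<le> a" "k \<le> m"
  shows "\<bar>- sin (2 * \<theta>) / 2 * (1 + diag_corr \<theta> a m 1) - nn_limit \<theta>\<bar> \<le> 2 * ((sin (2 * \<theta>))\<^sup>2) ^ k"
proof -
  have "- sin (2 * \<theta>) / 2 * (1 + diag_corr \<theta> a m 1) - nn_limit \<theta>
      = - sin (2 * \<theta>) / 2 * diag_corr_error \<theta> a m 1"
    by (simp add: nn_limit_def diag_corr_error_def field_simps)
  then have "\<bar>- sin (2 * \<theta>) / 2 * (1 + diag_corr \<theta> a m 1) - nn_limit \<theta>\<bar>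
      = \<bar>sin (2 * \<theta>)\<bar> / 2 * \<bar>diag_corr_error \<theta> a m 1\<bar>"
    by (simp add: abs_mult)
  also have "\<dots> \<le> 1 / 2 * (2 * ((sin (2 * \<theta>))\<^sup>2) ^ k)"
    using abs_diag_corr_error_le[of 1 k a m \<theta>] assms abs_sin_le_one[of "2 * \<theta>"]
    by (intro mult_mono) auto
  finally show ?thesis
    by simp
qed

lemma nn_corr_approx:
  assumes "j = (a + 1, b) \<or> j = (a, b + 1)"
  shows "\<bar>corr \<theta> (a, b) j - nn_limit \<theta>\<bar> \<le> 2 * ((sin (2 * \<theta>))\<^sup>2) ^ (min a b - 1)"
proof (cases "min a b = 0")
  case True
  have "\<bar>corr \<theta> (a, b) j - nn_limit \<theta>\<bar> \<le> \<bar>corr \<theta> (a, b) j\<bar> + \<bar>nn_limit \<theta>\<bar>"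
    by (rule abs_triangle_ineq4)
  also have "\<dots> \<le> 2"
    using abs_corr_le_one[of \<theta> "(a, b)" j] abs_nn_limit_le_one[of \<theta>] by simp
  finally show ?thesis
    using True by simp
next
  case False
  then obtain a0 b0 where ab: "a = Suc a0" "b = Suc b0"
    by (metis min_0L min_0R not0_implies_Suc)
  from assms show ?thesis
  proof
    assume "j = (a + 1, b)"
    then show ?thesis
      using abs_diag_nn_corr_sub_nn_limit_le[of "min a b - 1" "Suc a0" b0 \<theta>]
      by (simp add: ab nn_corr_eq_diag_corr)
  next
    assume "j = (a, b + 1)"
    then show ?thesis
      using abs_diag_nn_corr_sub_nn_limit_le[of "min a b - 1" a0 "Suc b0" \<theta>]
      by (simp add: ab nn_corr_eq_diag_corr)
  qed
qed

lemma nn_corr_eq_nn_limit: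
  assumes "(sin (2 * \<theta>))\<^sup>2 = 1" "i \<in> parents j"
  shows "corr \<theta> i j = nn_limit \<theta>"
proof -
  have "\<bar>cos (2 * \<theta>)\<bar> = 0"
    using assms(1) sin_squared_eq[of "2 * \<theta>"] by simp
  then have nn: "nn_limit \<theta> = - sin (2 * \<theta>)"
    by (simp add: nn_limit_def corr_ratio_def)
  have "corr \<theta> i (fst e) = 1" if "e \<in> set (in_edges j)" for e
    using corr_same_layer_eq_one[OF assms(1)] parents_layer[OF fst_in_parents[OF that]]
      parents_layer[OF assms(2)] by simp
  moreover have "indeg j \<ge> 1"
    using indeg_pos parents_layer[OF assms(2)] by (metis le_add2)
  ultimately show ?thesis
    using corr_parent_child[OF assms(2), of \<theta>]
    by (simp add: nn cong: map_cong) (simp add: sum_list_triv length_in_edges)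
qed

lemma nn_corr_tendsto:
  fixes a b :: "nat \<Rightarrow> nat" and j :: "nat \<Rightarrow> site"
  assumes j_nb: "\<forall>\<^sub>F L in sequentially. j L = (a L + 1, b L) \<or> j L = (a L, b L + 1)"
    and min_inf: "filterlim (\<lambda>L. min (a L) (b L)) at_top sequentially"
  shows "(\<lambda>L. corr \<theta> (a L, b L) (j L)) \<longlonglongrightarrow> nn_limit \<theta>"
proof (cases "(sin (2 * \<theta>))\<^sup>2 = 1")
  case True
  have "\<forall>\<^sub>F L in sequentially. corr \<theta> (a L, b L) (j L) = nn_limit \<theta>"
    using j_nb by (rule eventually_mono) (simp add: nn_corr_eq_nn_limit[OF True] parent_of_nn)
  then show ?thesis
    by (rule tendsto_eventually)
next
  case False
  define r where "r = (sin (2 * \<theta>))\<^sup>2"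
  have r: "\<bar>r\<bar> < 1"
    using False sin_double_squared_le_one[of \<theta>] by (simp add: r_def)
  have "((\<lambda>L. corr \<theta> (a L, b L) (j L) - nn_limit \<theta>) \<longlongrightarrow> 0) sequentially"
  proof (rule Lim_null_comparison)
    show "\<forall>\<^sub>F L in sequentially.
        norm (corr \<theta> (a L, b L) (j L) - nn_limit \<theta>) \<le> 2 * r ^ (min (a L) (b L) - 1)"
      using j_nb by (rule eventually_mono) (use nn_corr_approx in \<open>simp add: r_def\<close>)
    have "(\<lambda>n. r ^ n) \<longlonglongrightarrow> 0"
      using r by (intro LIMSEQ_power_zero) simp
    then have "(\<lambda>L. r ^ (min (a L) (b L) - 1)) \<longlonglongrightarrow> 0"
      by (rule filterlim_compose[OF _ filterlim_compose[OF filterlim_minus_const_nat_at_top min_inf]])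
    then show "(\<lambda>L. 2 * r ^ (min (a L) (b L) - 1)) \<longlonglongrightarrow> 0"
      by (rule tendsto_mult_right_zero)
  qed
  then show ?thesis
    by (simp add: LIM_zero_iff)
qed

lemma whip_ZZ_tendsto:
  fixes a b :: "nat \<Rightarrow> nat" and j :: "nat \<Rightarrow> site"
  assumes j_nb: "\<forall>L\<ge>2. j L = (a L + 1, b L) \<or> j L = (a L, b L + 1)"
    and j_in: "\<forall>L\<ge>2. j L \<in> lattice L"
    and min_inf: "filterlim (\<lambda>L. min (a L) (b L)) at_top sequentially"
  shows "(\<lambda>L. whip_ZZ L \<theta> (a L, b L) (j L)) \<longlonglongrightarrow> complex_of_real (whip_limit \<theta>)"
proof -
  have "whip_ZZ L \<theta> (a L, b L) (j L) = complex_of_real (corr \<theta> (a L, b L) (j L))" if "L \<ge> 2" for L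
    using j_nb[rule_format, OF that] j_in[rule_format, OF that]
    by (intro whip_ZZ_eq_corr) (auto simp: lattice_def)
  then have "\<forall>\<^sub>F L in sequentially.
      complex_of_real (corr \<theta> (a L, b L) (j L)) = whip_ZZ L \<theta> (a L, b L) (j L)"
    unfolding eventually_sequentially by (intro exI[of _ 2]) simp
  moreover have "(\<lambda>L. corr \<theta> (a L, b L) (j L)) \<longlonglongrightarrow> whip_limit \<theta>"
    unfolding whip_limit_eq_nn_limit
    using j_nb min_inf by (intro nn_corr_tendsto) (auto simp: eventually_sequentially)
  ultimately show ?thesis
    by (intro Lim_transform_eventually[OF tendsto_of_real])
qed

section \<open>Energy density\<close>

lemma sum_nn_pairs:
  "(\<Sum>x\<in>nn_pairs L. f x) = (\<Sum>p\<in>{0..<L - 1} \<times> {0..<L}. f (p, (fst p + 1, snd p)))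
    + (\<Sum>p\<in>{0..<L} \<times> {0..<L - 1}. f (p, (fst p, snd p + 1)))"
proof -
  define right where "right = (\<lambda>p :: site. (p, (fst p + 1, snd p)))"
  define up where "up = (\<lambda>p :: site. (p, (fst p, snd p + 1)))"
  have "nn_pairs L = right ` ({0..<L - 1} \<times> {0..<L}) \<union> up ` ({0..<L} \<times> {0..<L - 1})"
    by (auto simp: nn_pairs_def lattice_def image_iff right_def up_def)
  moreover have "right ` ({0..<L - 1} \<times> {0..<L}) \<inter> up ` ({0..<L} \<times> {0..<L - 1}) = {}"
    by (auto simp: right_def up_def)
  moreover have "inj right" "inj up"
    by (auto simp: right_def up_def intro: injI)
  ultimately show ?thesis
    by (simp add: sum.union_disjoint sum.reindex inj_on_subset[of _ UNIV])
      (simp add: right_def up_def)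
qed

lemma nn_pairs_parent: "x \<in> nn_pairs L \<Longrightarrow> fst x \<in> parents (snd x)"
  by (auto simp: nn_pairs_def intro!: parent_of_nn)

lemma card_nn_pairs: "card (nn_pairs L) = 2 * L * (L - 1)"
  using sum_nn_pairs[of "\<lambda>_. 1 :: nat" L] by (simp add: algebra_simps)

lemma sum_power_pred_le:
  assumes "0 \<le> r" "r < (1 :: real)"
  shows "(\<Sum>a\<in>{0..<L}. r ^ (a - 1)) \<le> 1 + 1 / (1 - r)"
proof -
  have "(\<Sum>a\<in>{0..<L}. r ^ (a - 1)) \<le> (\<Sum>a<Suc L. r ^ (a - 1))"
    by (rule sum_mono2) (use assms in auto)
  also have "\<dots> = 1 + (\<Sum>a<L. r ^ a)"
    by (subst sum.lessThan_Suc_shift) simp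
  also have "(\<Sum>a<L. r ^ a) = (1 - r ^ L) / (1 - r)"
    using assms by (simp add: sum_gp_strict)
  also have "\<dots> \<le> 1 / (1 - r)"
    using assms by (intro divide_right_mono) auto
  finally show ?thesis
    by simp
qed

lemma sum_power_min_pred_le:
  assumes "0 \<le> r" "r < (1 :: real)"
  shows "(\<Sum>p\<in>{0..<L} \<times> {0..<L}. r ^ (min (fst p) (snd p) - 1)) \<le> 2 * real L * (1 + 1 / (1 - r))"
proof -
  have "(\<Sum>p\<in>{0..<L} \<times> {0..<L}. r ^ (min (fst p) (snd p) - 1))
      \<le> (\<Sum>p\<in>{0..<L} \<times> {0..<L}. r ^ (fst p - 1) + r ^ (snd p - 1))"
    using assms by (intro sum_mono) (auto simp: min_def)
  also have "\<dots> = 2 * real L * (\<Sum>a\<in>{0..<L}. r ^ (a - 1))"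
  proof -
    have "(\<Sum>p\<in>{0..<L} \<times> {0..<L}. r ^ (fst p - 1)) = (\<Sum>a\<in>{0..<L}. \<Sum>b\<in>{0..<L}. r ^ (a - 1))"
      "(\<Sum>p\<in>{0..<L} \<times> {0..<L}. r ^ (snd p - 1)) = (\<Sum>a\<in>{0..<L}. \<Sum>b\<in>{0..<L}. r ^ (b - 1))"
      by (subst sum.cartesian_product, simp add: split_def)+
    then show ?thesis
      by (simp add: sum.distrib flip: sum_distrib_left)
  qed
  also have "\<dots> \<le> 2 * real L * (1 + 1 / (1 - r))"
    using sum_power_pred_le[OF assms] by (intro mult_left_mono) auto
  finally show ?thesis .
qed

definition mean_nn_corr :: "real \<Rightarrow> nat \<Rightarrow> real" where
  "mean_nn_corr \<theta> L
     = 1 / (2 * real L * (real L - 1)) * (\<Sum>x\<in>nn_pairs L. corr \<theta> (fst x) (snd x))"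

lemma ising_energy_eq_mean_nn_corr: "ising_energy L \<theta> = complex_of_real (- mean_nn_corr \<theta> L)"
proof -
  have "(\<Sum>(i, j)\<in>nn_pairs L. whip_ZZ L \<theta> i j)
      = (\<Sum>x\<in>nn_pairs L. complex_of_real (corr \<theta> (fst x) (snd x)))"
    by (rule sum.cong) (auto simp: split_def nn_pairs_def whip_ZZ_eq_corr)
  then show ?thesis
    by (simp add: ising_energy_def mean_nn_corr_def)
qed

lemma mean_nn_corr_diff:
  assumes "L \<ge> 2"
  shows "mean_nn_corr \<theta> L - nn_limit \<theta>
    = 1 / (2 * real L * (real L - 1)) * (\<Sum>x\<in>nn_pairs L. corr \<theta> (fst x) (snd x) - nn_limit \<theta>)"
  using assms by (simp add: mean_nn_corr_def sum_subtractf card_nn_pairs of_nat_diff field_simps)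

lemma mean_nn_corr_eq_nn_limit:
  assumes "(sin (2 * \<theta>))\<^sup>2 = 1" "L \<ge> 2"
  shows "mean_nn_corr \<theta> L = nn_limit \<theta>"
  using mean_nn_corr_diff[OF assms(2), of \<theta>]
  by (simp add: nn_corr_eq_nn_limit[OF assms(1)] nn_pairs_parent)

lemma sum_abs_nn_corr_error_le:
  assumes "(sin (2 * \<theta>))\<^sup>2 < 1"
  shows "(\<Sum>x\<in>nn_pairs L. \<bar>corr \<theta> (fst x) (snd x) - nn_limit \<theta>\<bar>)
    \<le> 8 * real L * (1 + 1 / (1 - (sin (2 * \<theta>))\<^sup>2))"
proof -
  define g where "g p = 2 * ((sin (2 * \<theta>))\<^sup>2) ^ (min (fst p) (snd p) - 1)" for p :: site
  have g_nonneg: "0 \<le> g p" for p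
    by (simp add: g_def)
  have "(\<Sum>p\<in>{0..<L - 1} \<times> {0..<L}. \<bar>corr \<theta> p (fst p + 1, snd p) - nn_limit \<theta>\<bar>)
      \<le> (\<Sum>p\<in>{0..<L - 1} \<times> {0..<L}. g p)"
    using nn_corr_approx[of "(fst p + 1, snd p)" "fst p" "snd p" \<theta> for p]
    by (intro sum_mono) (simp add: g_def)
  also have "\<dots> \<le> (\<Sum>p\<in>{0..<L} \<times> {0..<L}. g p)"
    by (rule sum_mono2) (auto simp: g_nonneg)
  finally have right: "(\<Sum>p\<in>{0..<L - 1} \<times> {0..<L}. \<bar>corr \<theta> p (fst p + 1, snd p) - nn_limit \<theta>\<bar>)
      \<le> (\<Sum>p\<in>{0..<L} \<times> {0..<L}. g p)" .
  have "(\<Sum>p\<in>{0..<L} \<times> {0..<L - 1}. \<bar>corr \<theta> p (fst p, snd p + 1) - nn_limit \<theta>\<bar>)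
      \<le> (\<Sum>p\<in>{0..<L} \<times> {0..<L - 1}. g p)"
    using nn_corr_approx[of "(fst p, snd p + 1)" "fst p" "snd p" \<theta> for p]
    by (intro sum_mono) (simp add: g_def)
  also have "\<dots> \<le> (\<Sum>p\<in>{0..<L} \<times> {0..<L}. g p)"
    by (rule sum_mono2) (auto simp: g_nonneg)
  finally have up: "(\<Sum>p\<in>{0..<L} \<times> {0..<L - 1}. \<bar>corr \<theta> p (fst p, snd p + 1) - nn_limit \<theta>\<bar>)
      \<le> (\<Sum>p\<in>{0..<L} \<times> {0..<L}. g p)" .
  have "(\<Sum>p\<in>{0..<L} \<times> {0..<L}. g p) \<le> 4 * real L * (1 + 1 / (1 - (sin (2 * \<theta>))\<^sup>2))"
    using sum_power_min_pred_le[of "(sin (2 * \<theta>))\<^sup>2" L] assms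
    by (simp add: g_def flip: sum_distrib_left)
  with right up show ?thesis
    by (simp add: sum_nn_pairs[where f = "\<lambda>x. \<bar>corr \<theta> (fst x) (snd x) - nn_limit \<theta>\<bar>"])
qed

lemma abs_mean_nn_corr_diff_le:
  assumes "(sin (2 * \<theta>))\<^sup>2 < 1" "L \<ge> 2"
  shows "\<bar>mean_nn_corr \<theta> L - nn_limit \<theta>\<bar> \<le> 8 * (1 + 1 / (1 - (sin (2 * \<theta>))\<^sup>2)) / real L"
proof -
  define K where "K = 1 + 1 / (1 - (sin (2 * \<theta>))\<^sup>2)"
  define N where "N = 2 * real L * (real L - 1)"
  have N: "N > 0" "real L * real L \<le> N"
    using assms(2) by (simp_all add: N_def algebra_simps)
  have K: "K \<ge> 0"
    using assms(1) by (simp add: K_def)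
  have "\<bar>mean_nn_corr \<theta> L - nn_limit \<theta>\<bar>
      \<le> 1 / N * (\<Sum>x\<in>nn_pairs L. \<bar>corr \<theta> (fst x) (snd x) - nn_limit \<theta>\<bar>)"
    using N by (simp add: mean_nn_corr_diff[OF assms(2)] N_def[symmetric] abs_mult sum_abs
        divide_right_mono)
  also have "\<dots> \<le> 1 / N * (8 * real L * K)"
    using N sum_abs_nn_corr_error_le[OF assms(1), of L] by (intro mult_left_mono) (auto simp: K_def)
  also have "\<dots> \<le> 8 * K / real L"
    using N K assms(2) by (simp add: field_simps mult_left_mono)
  finally show ?thesis
    by (simp add: K_def)
qed

lemma ising_energy_tendsto:
  "(\<lambda>L. ising_energy L \<theta>) \<longlonglongrightarrow> complex_of_real (- whip_limit \<theta>)"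
proof -
  have "(\<lambda>L. mean_nn_corr \<theta> L) \<longlonglongrightarrow> nn_limit \<theta>"
  proof (cases "(sin (2 * \<theta>))\<^sup>2 = 1")
    case True
    then have "\<forall>\<^sub>F L in sequentially. mean_nn_corr \<theta> L = nn_limit \<theta>"
      unfolding eventually_sequentially using mean_nn_corr_eq_nn_limit by blast
    then show ?thesis
      by (rule tendsto_eventually)
  next
    case False
    then have r: "(sin (2 * \<theta>))\<^sup>2 < 1"
      using sin_double_squared_le_one[of \<theta>] by simp
    have "((\<lambda>L. mean_nn_corr \<theta> L - nn_limit \<theta>) \<longlongrightarrow> 0) sequentially"
    proof (rule Lim_null_comparison)
      show "\<forall>\<^sub>F L in sequentially. norm (mean_nn_corr \<theta> L - nn_limit \<theta>)
          \<le> 8 * (1 + 1 / (1 - (sin (2 * \<theta>))\<^sup>2)) / real L"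
        unfolding eventually_sequentially using abs_mean_nn_corr_diff_le[OF r] by auto
    qed (rule lim_const_over_n)
    then show ?thesis
      by (simp add: LIM_zero_iff)
  qed
  then show ?thesis
    unfolding ising_energy_eq_mean_nn_corr whip_limit_eq_nn_limit
    by (intro tendsto_of_real tendsto_minus)
qed

section \<open>The series\<close>

(* whip_coeff (n + 1) is the Catalan number C n. *)
definition whip_coeff :: "nat \<Rightarrow> real" where
  "whip_coeff n = 4 ^ (n - 1) * Gamma (real n - 1 / 2) / (sqrt pi * fact n)"

lemma whip_coeff_1: "whip_coeff 1 = 1"
  by (simp add: whip_coeff_def Gamma_one_half_real)

lemma whip_coeff_Suc:
  "whip_coeff (Suc (Suc n)) = whip_coeff (Suc n) * (4 * real n + 2) / (real n + 2)"
proof -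
  have "real n + 1 / 2 \<notin> \<int>\<^sub>\<le>\<^sub>0"
    using nonpos_Ints_nonpos[of "real n + 1 / 2"] by force
  then have "Gamma (real n + 1 / 2 + 1) = (real n + 1 / 2) * Gamma (real n + 1 / 2)"
    by (rule Gamma_plus1)
  then have Gamma: "Gamma (real (Suc (Suc n)) - 1 / 2) = (real n + 1 / 2) * G"
    if "G = Gamma (real (Suc n) - 1 / 2)" for G
    using that by (simp add: add.commute)
  define G where "G = Gamma (real (Suc n) - 1 / 2)"
  have nonzero: "sqrt pi \<noteq> 0" "(fact n :: real) \<noteq> 0" "real n + 1 \<noteq> 0" "real n + 2 \<noteq> 0"
    by auto
  have "whip_coeff (Suc (Suc n))
      = (4 * 4 ^ n * ((real n + 1 / 2) * G)) / (sqrt pi * ((real n + 2) * ((real n + 1) * fact n)))"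
    unfolding whip_coeff_def Gamma[OF G_def] by (simp add: algebra_simps)
  also have "\<dots> = (4 ^ n * G / (sqrt pi * ((real n + 1) * fact n))) * (4 * real n + 2) / (real n + 2)"
    using nonzero by (simp add: divide_simps)
  also have "4 ^ n * G / (sqrt pi * ((real n + 1) * fact n)) = whip_coeff (Suc n)"
    unfolding whip_coeff_def G_def by (simp add: algebra_simps)
  finally show ?thesis .
qed

lemma whip_coeff_pos: "n \<ge> 1 \<Longrightarrow> whip_coeff n > 0"
  unfolding whip_coeff_def by (intro divide_pos_pos mult_pos_pos Gamma_real_pos) auto

lemma gbinomial_half_eq_whip_coeff:
  "((1 / 2 :: real) gchoose (Suc n)) * (-4) ^ Suc n = - 2 * whip_coeff (Suc n)"
proof (induction n)
  case 0
  then show ?case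
    by (simp add: whip_coeff_1[unfolded One_nat_def])
next
  case (Suc n)
  have rec: "((1 / 2 :: real) gchoose Suc (Suc n))
      = (1 / 2 - real (Suc n)) * ((1 / 2 :: real) gchoose (Suc n)) / real (Suc (Suc n))"
    using gbinomial_mult_1[of "1 / 2 :: real" "Suc n"] by (simp add: field_simps)
  have "((1 / 2 :: real) gchoose Suc (Suc n)) * (-4) ^ Suc (Suc n)
      = (((1 / 2 :: real) gchoose (Suc n)) * (-4) ^ Suc n)
        * ((-4) * (1 / 2 - real (Suc n)) / real (Suc (Suc n)))"
    unfolding rec by (simp add: field_simps)
  also have "\<dots> = - 2 * whip_coeff (Suc (Suc n))"
    unfolding Suc.IH whip_coeff_Suc by (simp add: field_simps)
  finally show ?case .
qed

lemma whip_coeff_sums: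
  assumes "\<bar>4 * y\<bar> < (1 :: real)"
  shows "(\<lambda>k. whip_coeff (Suc k) * y ^ Suc k) sums ((1 - sqrt (1 - 4 * y)) / 2)"
proof -
  define f where "f n = ((1 / 2 :: real) gchoose n) * (- 4 * y) ^ n" for n
  have "f sums ((1 + - 4 * y) powr (1 / 2))"
    unfolding f_def by (rule gen_binomial_real) (use assms in simp)
  moreover have "(1 + - 4 * y) powr (1 / 2) = sqrt (1 - 4 * y)"
    using assms by (simp add: powr_half_sqrt)
  moreover have "f 0 = 1"
    by (simp add: f_def)
  ultimately have "(\<lambda>n. f (Suc n)) sums (sqrt (1 - 4 * y) - 1)"
    using sums_Suc_iff[of f] by simp
  moreover have "f (Suc n) = - 2 * (whip_coeff (Suc n) * y ^ Suc n)" for n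
    unfolding f_def power_mult_distrib[of "-4" y] using gbinomial_half_eq_whip_coeff[of n]
    by (metis (no_types, lifting) mult.assoc mult.commute mult.left_commute)
  ultimately have "(\<lambda>n. - 1 / 2 * (- 2 * (whip_coeff (Suc n) * y ^ Suc n)))
      sums (- 1 / 2 * (sqrt (1 - 4 * y) - 1))"
    by (intro sums_mult) simp
  moreover have "(\<lambda>n. - 1 / 2 * (- 2 * (whip_coeff (Suc n) * y ^ Suc n)))
      = (\<lambda>n. whip_coeff (Suc n) * y ^ Suc n)"
    by simp
  moreover have "- 1 / 2 * (sqrt (1 - 4 * y) - 1) = (1 - sqrt (1 - 4 * y)) / 2"
    by (simp add: algebra_simps)
  ultimately show ?thesis
    by argo
qed

definition central_binom_ratio :: "nat \<Rightarrow> real" where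
  "central_binom_ratio k = whip_coeff (Suc k) * real (Suc k) / 4 ^ k"

lemma central_binom_ratio_0: "central_binom_ratio 0 = 1"
  by (simp add: central_binom_ratio_def whip_coeff_1[unfolded One_nat_def])

lemma central_binom_ratio_Suc:
  "central_binom_ratio (Suc k) = central_binom_ratio k * (2 * real k + 1) / (2 * real k + 2)"
proof -
  have "(4 :: real) ^ k \<noteq> 0" "real k + 2 \<noteq> 0" "2 * real k + 2 \<noteq> 0"
    by auto
  then show ?thesis
    unfolding central_binom_ratio_def whip_coeff_Suc by (simp add: divide_simps) (simp add: algebra_simps)
qed

lemma central_binom_ratio_nonneg: "central_binom_ratio k \<ge> 0"
  unfolding central_binom_ratio_def using whip_coeff_pos[of "Suc k"] by simp

lemma central_binom_ratio_squared_le: "(central_binom_ratio k)\<^sup>2 \<le> 1 / (2 * real k + 1)"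
proof (induction k)
  case 0
  then show ?case
    by (simp add: central_binom_ratio_0)
next
  case (Suc k)
  have "(central_binom_ratio (Suc k))\<^sup>2
      = (central_binom_ratio k)\<^sup>2 * ((2 * real k + 1) / (2 * real k + 2))\<^sup>2"
    unfolding central_binom_ratio_Suc by (simp add: power_mult_distrib power_divide)
  also have "\<dots> \<le> 1 / (2 * real k + 1) * ((2 * real k + 1) / (2 * real k + 2))\<^sup>2"
    by (rule mult_right_mono[OF Suc.IH]) simp
  also have "\<dots> \<le> 1 / (2 * real (Suc k) + 1)"
  proof -
    have "(2 * real k + 1) * (2 * real k + 3) \<le> (2 * real k + 2)\<^sup>2"
      by (simp add: power2_eq_square algebra_simps)
    then show ?thesis
      by (simp add: power2_eq_square divide_simps) (simp add: algebra_simps)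
  qed
  finally show ?case .
qed

lemma central_binom_ratio_tendsto_0: "central_binom_ratio \<longlonglongrightarrow> 0"
proof -
  have "((\<lambda>n. central_binom_ratio n - 0) \<longlongrightarrow> 0) sequentially"
  proof (rule Lim_null_comparison)
    show "\<forall>\<^sub>F n in sequentially. norm (central_binom_ratio n - 0) \<le> sqrt (1 / real (Suc n))"
    proof (rule always_eventually, rule allI)
      fix n
      have "(central_binom_ratio n)\<^sup>2 \<le> 1 / real (Suc n)"
        using central_binom_ratio_squared_le[of n] by (rule order.trans) (simp add: divide_simps)
      then show "norm (central_binom_ratio n - 0) \<le> sqrt (1 / real (Suc n))"
        using central_binom_ratio_nonneg[of n] real_le_rsqrt by simp
    qed
    have "(\<lambda>n. 1 / real (Suc n)) \<longlonglongrightarrow> 0"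
      using LIMSEQ_Suc[OF lim_1_over_n] by simp
    then show "(\<lambda>n. sqrt (1 / real (Suc n))) \<longlonglongrightarrow> 0"
      using tendsto_real_sqrt by fastforce
  qed
  then show ?thesis
    by simp
qed

(* The value of the generating function at the radius of convergence y = 1/4: the terms are
   twice the differences of central_binom_ratio, so the series telescopes. *)
lemma whip_coeff_sums_at_radius: "(\<lambda>k. whip_coeff (Suc k) / 4 ^ k) sums 2"
proof -
  have "(\<lambda>n. central_binom_ratio n - central_binom_ratio (Suc n)) sums (central_binom_ratio 0 - 0)"
    by (rule telescope_sums'[OF central_binom_ratio_tendsto_0])
  then have "(\<lambda>n. 2 * (central_binom_ratio n - central_binom_ratio (Suc n))) sums 2"
    using sums_mult[of _ _ 2] central_binom_ratio_0 by fastforce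
  moreover have "2 * (central_binom_ratio n - central_binom_ratio (Suc n)) = whip_coeff (Suc n) / 4 ^ n"
    for n
  proof -
    have "(4 :: real) ^ n \<noteq> 0" "2 * real n + 2 \<noteq> 0"
      by auto
    then show ?thesis
      unfolding central_binom_ratio_Suc unfolding central_binom_ratio_def
      by (simp add: divide_simps) (simp add: algebra_simps)
  qed
  ultimately show ?thesis
    by simp
qed

lemma whip_coeff_odd_sums:
  assumes "4 * x\<^sup>2 < (1 :: real)" "x \<noteq> 0"
  shows "(\<lambda>k. whip_coeff (Suc k) * x ^ (2 * k + 1)) sums ((1 - sqrt (1 - 4 * x\<^sup>2)) / (2 * x))"
proof -
  have "\<bar>4 * x\<^sup>2\<bar> < 1"
    using assms(1) by simp
  from sums_divide[OF whip_coeff_sums[OF this], of x]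
  have "(\<lambda>k. whip_coeff (Suc k) * (x\<^sup>2) ^ Suc k / x) sums ((1 - sqrt (1 - 4 * x\<^sup>2)) / 2 / x)" .
  moreover have "whip_coeff (Suc k) * (x\<^sup>2) ^ Suc k / x = whip_coeff (Suc k) * x ^ (2 * k + 1)" for k
  proof -
    have "(x\<^sup>2) ^ Suc k = x ^ (2 * Suc k)"
      by (simp only: power_mult)
    also have "\<dots> = x ^ Suc (2 * k + 1)"
      by simp
    also have "\<dots> = x * x ^ (2 * k + 1)"
      by (rule power_Suc)
    finally show ?thesis
      using assms(2) by simp
  qed
  ultimately show ?thesis
    by simp
qed

lemma whip_coeff_odd_sums_at_radius:
  assumes "x\<^sup>2 = (1 / 4 :: real)"
  shows "(\<lambda>k. whip_coeff (Suc k) * x ^ (2 * k + 1)) sums (2 * x)"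
proof -
  have "x * (whip_coeff (Suc k) / 4 ^ k) = whip_coeff (Suc k) * x ^ (2 * k + 1)" for k
  proof -
    have "x ^ (2 * k + 1) = x * (x\<^sup>2) ^ k"
      by (simp add: power_mult)
    then show ?thesis
      by (simp add: assms power_divide)
  qed
  then show ?thesis
    using sums_mult[OF whip_coeff_sums_at_radius, of x] by (simp add: mult.commute)
qed

lemma whip_term_sums: "(\<lambda>k. whip_term \<theta> (Suc k)) sums (- whip_limit \<theta>)"
proof -
  define x where "x = cos \<theta> * sin \<theta>"
  define s where "s = sin (2 * \<theta>)"
  have sx: "s = 2 * x"
    unfolding s_def x_def by (simp add: sin_double)
  have whip_term_eq: "(\<lambda>k. whip_term \<theta> (Suc k)) = (\<lambda>k. whip_coeff (Suc k) * x ^ (2 * k + 1))"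
    unfolding whip_term_def whip_coeff_def x_def by simp
  have cos: "\<bar>cos (2 * \<theta>)\<bar> = sqrt (1 - s\<^sup>2)"
    unfolding s_def by (simp add: cos_squared_eq[symmetric])
  consider "x = 0" | "x \<noteq> 0" "s\<^sup>2 < 1" | "s\<^sup>2 = 1"
    using sin_double_squared_le_one[of \<theta>] sx by (fastforce simp: s_def)
  then show ?thesis
  proof cases
    case 1
    then show ?thesis
      using sx by (simp add: whip_term_eq whip_limit_def s_def)
  next
    case 2
    then have "(1 - sqrt (1 - 4 * x\<^sup>2)) / (2 * x) = - whip_limit \<theta>"
      using sx unfolding whip_limit_def cos s_def[symmetric]
      by (simp add: power_mult_distrib field_simps)
    with 2 sx show ?thesis
      using whip_coeff_odd_sums[of x] by (simp add: whip_term_eq power_mult_distrib)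
  next
    case 3
    then have "s \<noteq> 0" "\<bar>cos (2 * \<theta>)\<bar> = 0"
      using cos by auto
    moreover have "1 / s = s"
      using 3 \<open>s \<noteq> 0\<close> by (simp add: power2_eq_square field_simps)
    ultimately have "whip_limit \<theta> = - s"
      unfolding whip_limit_def s_def[symmetric] by (simp add: minus_divide_left)
    with 3 sx show ?thesis
      using whip_coeff_odd_sums_at_radius[of x] by (simp add: whip_term_eq power_mult_distrib)
  qed
qed

theorem mainTheorem7:
  fixes a b :: "nat \<Rightarrow> nat" and j :: "nat \<Rightarrow> site" and \<theta> :: real
  assumes j_nb: "\<forall>L\<ge>2. j L = (a L + 1, b L) \<or> j L = (a L, b L + 1)"
    and j_in: "\<forall>L\<ge>2. j L \<in> lattice L"
    and min_inf: "filterlim (\<lambda>L. min (a L) (b L)) at_top sequentially"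
  shows "(\<lambda>L. whip_ZZ L \<theta> (a L, b L) (j L)) \<longlonglongrightarrow> complex_of_real (whip_limit \<theta>)
    \<and> (\<lambda>k. whip_term \<theta> (Suc k)) sums (- whip_limit \<theta>)
    \<and> (\<lambda>L. ising_energy L \<theta>) \<longlonglongrightarrow> complex_of_real (- whip_limit \<theta>)"
  using whip_ZZ_tendsto[OF j_nb j_in min_inf] whip_term_sums ising_energy_tendsto by blast

end
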